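(* Let $X_1,\dots,X_n$ ($n\ge 1$) and $Y$ be jointly distributed discrete random variables, $\mathbf X=(X_1,\dots,X_n)$, and let $\Pi$ be any partial information decomposition (as defined in the context). Then $$\mathrm{DRSI}(\mathbf X;Y)=I(\mathbf X;Y)-\sum_{j=1}^n I(X_j;Y\mid \mathbf X_{-j}),$$ where $\mathbf X_{-j}$ denotes the collection of all sources except $X_j$. In particular, $\mathrm{DRSI}$ takes the same value for every partial information decomposition and depends only on Shannon entropies.
   Context: Notation: $[n]=\{1,\dots,n\}$. For $\mathbf a\subseteq[n]$, $X_{\mathbf a}=(X_i)_{i\in\mathbf a}$ (with $X_\emptyset$ a constant), and $\mathbf X_{-j}=X_{[n]\setminus\{j\}}$. Antichains: $\mathcal A_n$ is the set of all nonempty collections $\alpha$ of nonempty subsets of $[n]$ such that no element of $\alpha$ is a proper subset of another element of $\alpha$. Partial information decomposition (PID): any function $\Pi:\mathcal A_n\to\mathbb R$ satisfying, for every nonempty $\mathbf a\subseteq[n]$, $$I(X_{\mathbf a};Y)=\sum_{\alpha\in\mathcal A_n:\ \exists \mathbf b\in\alpha,\ \mathbf b\subseteq \mathbf a}\Pi(\alpha).$$ Degree of vulnerability: $v(\alpha)=|\{i\in[n]: i\in\mathbf b\text{ for all }\mathbf b\in\alpha\}|$. $k$-vulnerable information: $I_{\mathrm v}^{(k)}(\mathbf X;Y)=\sum_{\alpha:\ v(\alpha)=k}\Pi(\alpha)$. Dual redundancy-synergy index: $\mathrm{DRSI}(\mathbf X;Y)=I_{\mathrm v}^{(0)}(\mathbf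 X;Y)-\sum_{k=2}^n (k-1)\,I_{\mathrm v}^{(k)}(\mathbf X;Y)$. *)

theory Defs
  imports "HOL-Probability.Probability"
begin

text \<open>Sub-collection of sources: X_a = (X_i)_{i in a}, as a random vector
  (a function on the index set a, undefined outside a).  X_{} is constant.\<close>
definition subvec :: "(nat \<Rightarrow> 'w \<Rightarrow> 'x) \<Rightarrow> nat set \<Rightarrow> 'w \<Rightarrow> (nat \<Rightarrow> 'x)" where
  "subvec X a = (\<lambda>w. restrict (\<lambda>i. X i w) a)"

definition antichains :: "nat \<Rightarrow> nat set set set" where
  "antichains n = {\<alpha>. \<alpha> \<noteq> {} \<and> (\<forall>b\<in>\<alpha>. b \<noteq> {} \<and> b \<subseteq> {1..n})
                       \<and> (\<forall>b\<in>\<alpha>. \<forall>c\<in>\<alpha>. \<not> b \<subset> c)}"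

definition MI :: "'w measure \<Rightarrow> real \<Rightarrow> (nat \<Rightarrow> 'w \<Rightarrow> 'x) \<Rightarrow> ('w \<Rightarrow> 'y) \<Rightarrow> nat set \<Rightarrow> real" where
  "MI M b X Y a = prob_space.mutual_information M b (count_space (subvec X a ` space M))
      (count_space (Y ` space M)) (subvec X a) Y"

definition CMI :: "'w measure \<Rightarrow> real \<Rightarrow> nat \<Rightarrow> (nat \<Rightarrow> 'w \<Rightarrow> 'x) \<Rightarrow> ('w \<Rightarrow> 'y) \<Rightarrow> nat \<Rightarrow> real" where
  "CMI M b n X Y j = prob_space.conditional_mutual_information M b
      (count_space (X j ` space M)) (count_space (Y ` space M))
      (count_space (subvec X ({1..n} - {j}) ` space M))
      (X j) Y (subvec X ({1..n} - {j}))"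

definition is_PID :: "'w measure \<Rightarrow> real \<Rightarrow> nat \<Rightarrow> (nat \<Rightarrow> 'w \<Rightarrow> 'x) \<Rightarrow> ('w \<Rightarrow> 'y)
    \<Rightarrow> (nat set set \<Rightarrow> real) \<Rightarrow> bool" where
  "is_PID M b n X Y Pd \<longleftrightarrow>
     (\<forall>a. a \<noteq> {} \<and> a \<subseteq> {1..n} \<longrightarrow>
        MI M b X Y a = (\<Sum>\<alpha>\<in>{\<alpha>\<in>antichains n. \<exists>c\<in>\<alpha>. c \<subseteq> a}. Pd \<alpha>))"

definition vuln :: "nat \<Rightarrow> nat set set \<Rightarrow> nat" where
  "vuln n \<alpha> = card {i\<in>{1..n}. \<forall>c\<in>\<alpha>. i \<in> c}"

definition vuln_info :: "nat \<Rightarrow> (nat set set \<Rightarrow> real) \<Rightarrow> nat \<Rightarrow> real" where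
  "vuln_info n Pd k = (\<Sum>\<alpha>\<in>{\<alpha>\<in>antichains n. vuln n \<alpha> = k}. Pd \<alpha>)"

definition DRSI :: "nat \<Rightarrow> (nat set set \<Rightarrow> real) \<Rightarrow> real" where
  "DRSI n Pd = vuln_info n Pd 0 - (\<Sum>k=2..n. (real k - 1) * vuln_info n Pd k)"

end

theory Submission
  imports Defs
begin

(*
  By the chain rule, I(X_j; Y | X_{-j}) = I(X; Y) - I(X_{-j}; Y).  Expanding both terms with
  the PID identity, an atom alpha contributes to I(X_{-j}; Y) exactly when some source set in
  alpha avoids j, that is for the n - v(alpha) indices j not common to all sets of alpha.
  Hence I(X; Y) - sum_j I(X_j; Y | X_{-j}) = sum_alpha (1 - v(alpha)) Pi(alpha), and grouping
  the atoms by their degree of vulnerability turns this sum into DRSI.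
*)

lemma (in prob_space) distributed_count_space_superset:
  assumes X: "simple_function M X" and S: "finite S" "X ` space M \<subseteq> S"
  shows "distributed M (count_space S) X (\<lambda>x. prob (X -` {x} \<inter> space M))"
proof -
  have d: "distributed M (count_space S) X
      (\<lambda>x. if x \<in> X ` space M then prob (X -` {x} \<inter> space M) else 0)"
    using X S by (intro distributed_simple_function_superset) auto
  have "X -` {x} \<inter> space M = {}" if "x \<notin> X ` space M" for x
    using that by auto
  then show ?thesis
    by (intro distributed_cong_density[THEN iffD1, OF _ _ _ d]) auto
qed

lemma (in information_space) entropy_count_space_superset:
  assumes X: "simple_function M X" and S: "finite S" "X ` space M \<subseteq> S"
  shows "entropy b (count_space S) X = \<H>(X)"
proof -
  let ?P = "\<lambda>x. prob (X -` {x} \<inter> space M)"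
  have "X -` {x} \<inter> space M = {}" if "x \<notin> X ` space M" for x
    using that by auto
  then have "entropy b (count_space S) X = - (\<Sum>x\<in>X ` space M. ?P x * log b (?P x))"
    using S by (auto simp: entropy_distr[OF distributed_count_space_superset[OF X S]]
        lebesgue_integral_count_space_finite intro!: sum.mono_neutral_right)
  also have "\<dots> = \<H>(X)"
    by (rule entropy_simple_distributed[OF simple_distributedI[OF X measure_nonneg refl], symmetric])
  finally show ?thesis .
qed

text \<open>The library's conditional mutual information places \<open>(Y, Z)\<close> on the product of
  the ranges of \<open>Y\<close> and \<open>Z\<close>, which is in general larger than the range of the pair.\<close>

lemma (in information_space) mutual_information_count_space_superset:
  assumes X: "simple_function M X" "finite S" "X ` space M \<subseteq> S"
    and Y: "simple_function M Y" "finite T" "Y ` space M \<subseteq> T"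
  shows "mutual_information b (count_space S) (count_space T) X Y
    = \<H>(X) + \<H>(Y) - \<H>(\<lambda>w. (X w, Y w))"
proof -
  have ST: "count_space S \<Otimes>\<^sub>M count_space T = count_space (S \<times> T)"
    using X Y by (simp add: pair_measure_count_space)
  have XY: "simple_function M (\<lambda>w. (X w, Y w))" "finite (S \<times> T)"
    "(\<lambda>w. (X w, Y w)) ` space M \<subseteq> S \<times> T"
    using X Y by auto
  have "mutual_information b (count_space S) (count_space T) X Y
      = entropy b (count_space S) X + entropy b (count_space T) Y
        - entropy b (count_space (S \<times> T)) (\<lambda>w. (X w, Y w))"
    using mutual_information_eq_entropy_conditional_entropy_distr[OF
        sigma_finite_measure_count_space_finite sigma_finite_measure_count_space_finite
        distributed_count_space_superset[OF X] _ distributed_count_space_superset[OF Y] _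
        distributed_count_space_superset[OF XY, folded ST]]
    using X Y by (simp add: ST integrable_count_space)
  then show ?thesis
    using X Y XY by (simp add: entropy_count_space_superset)
qed

corollary (in information_space) mutual_information_eq_entropies:
  assumes "simple_function M X" "simple_function M Y"
  shows "\<I>(X ; Y) = \<H>(X) + \<H>(Y) - \<H>(\<lambda>w. (X w, Y w))"
  using assms by (intro mutual_information_count_space_superset) (auto dest: simple_functionD)

lemma (in information_space) entropy_const: "\<H>(\<lambda>_. c) = 0"
proof -
  have "simple_distributed M (\<lambda>_. c) (\<lambda>x. prob ((\<lambda>_. c) -` {x} \<inter> space M))"
    by (rule simple_distributedI) auto
  from entropy_simple_distributed[OF this]
  have "\<H>(\<lambda>_. c) = - (\<Sum>x\<in>(\<lambda>_. c) ` space M.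
      prob ((\<lambda>_. c) -` {x} \<inter> space M) * log b (prob ((\<lambda>_. c) -` {x} \<inter> space M)))" .
  moreover have "(\<lambda>_. c) ` space M = {c}" and "(\<lambda>_. c) -` {c} \<inter> space M = space M"
    using not_empty by auto
  ultimately show ?thesis
    by (simp add: prob_space)
qed

lemma (in information_space) mutual_information_const:
  assumes Y: "simple_function M Y"
  shows "\<I>(\<lambda>_. c ; Y) = 0"
proof -
  have "\<H>(Pair c \<circ> Y) = \<H>(Y)"
    using Y by (rule entropy_of_inj) (simp add: inj_on_def)
  then show ?thesis
    using Y by (simp add: mutual_information_eq_entropies entropy_const comp_def)
qed

lemma (in information_space) mutual_information_of_inj:
  assumes X: "simple_function M X" and Y: "simple_function M Y"
    and inj: "inj_on f (X ` space M)"
  shows "\<I>(f \<circ> X ; Y) = \<I>(X ; Y)"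
proof -
  have XY: "simple_function M (\<lambda>w. (X w, Y w))"
    using X Y by (rule simple_function_Pair)
  have "inj_on (map_prod f id) ((\<lambda>w. (X w, Y w)) ` space M)"
    using inj by (auto simp: inj_on_def)
  from entropy_of_inj[OF XY this]
  have "\<H>(\<lambda>w. ((f \<circ> X) w, Y w)) = \<H>(\<lambda>w. (X w, Y w))"
    by (simp add: comp_def)
  moreover have "simple_function M (f \<circ> X)"
    using X by (rule simple_function_compose)
  ultimately show ?thesis
    using X Y by (simp only: mutual_information_eq_entropies entropy_of_inj[OF X inj])
qed

lemma (in information_space) conditional_mutual_information_chain_rule:
  assumes X: "simple_function M X" and Y: "simple_function M Y" and Z: "simple_function M Z"
  shows "\<I>(X ; Y | Z) = \<I>(\<lambda>w. (X w, Z w) ; Y) - \<I>(Z ; Y)"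
proof -
  have YZ: "simple_function M (\<lambda>w. (Y w, Z w))" and XZ: "simple_function M (\<lambda>w. (X w, Z w))"
    using X Y Z by auto
  have "count_space (Y ` space M) \<Otimes>\<^sub>M count_space (Z ` space M)
      = count_space (Y ` space M \<times> Z ` space M)"
    using Y Z by (simp add: pair_measure_count_space simple_functionD)
  moreover have "mutual_information b (count_space (X ` space M))
      (count_space (Y ` space M \<times> Z ` space M)) X (\<lambda>w. (Y w, Z w))
      = \<H>(X) + \<H>(\<lambda>w. (Y w, Z w)) - \<H>(\<lambda>w. (X w, Y w, Z w))"
    using X YZ Y Z by (intro mutual_information_count_space_superset) (auto dest: simple_functionD)
  ultimately have "\<I>(X ; Y | Z)
      = \<H>(X) + \<H>(\<lambda>w. (Y w, Z w)) - \<H>(\<lambda>w. (X w, Y w, Z w)) - \<I>(X ; Z)"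
    unfolding conditional_mutual_information_def by simp
  moreover have "\<H>((\<lambda>((x, z), y). (x, y, z)) \<circ> (\<lambda>w. ((X w, Z w), Y w)))
      = \<H>(\<lambda>w. ((X w, Z w), Y w))"
    by (rule entropy_of_inj[OF simple_function_Pair[OF XZ Y]]) (auto simp: inj_on_def)
  moreover have "\<H>(prod.swap \<circ> (\<lambda>w. (Z w, Y w))) = \<H>(\<lambda>w. (Z w, Y w))"
    using Z Y by (intro entropy_of_inj simple_function_Pair) auto
  ultimately show ?thesis
    using X Y Z XZ by (simp add: mutual_information_eq_entropies comp_def)
qed

lemma subvec_empty: "subvec X {} = (\<lambda>_ _. undefined)"
  by (simp add: subvec_def fun_eq_iff)

lemma simple_function_subvec:
  assumes "finite a" "\<And>i. i \<in> a \<Longrightarrow> simple_function M (X i)"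
  shows "simple_function M (subvec X a)"
  using assms
proof (induction a rule: finite_induct)
  case empty
  then show ?case
    by (simp add: subvec_empty)
next
  case (insert i a)
  have "subvec X (insert i a) = (\<lambda>(x, g). g(i := x)) \<circ> (\<lambda>w. (X i w, subvec X a w))"
    by (auto simp: subvec_def fun_eq_iff)
  moreover have "simple_function M (\<lambda>w. (X i w, subvec X a w))"
    using insert by (intro simple_function_Pair) auto
  ultimately show ?case
    by (simp only: simple_function_compose)
qed

lemma inj_on_split_coordinate:
  assumes "j \<in> a"
  shows "inj_on (\<lambda>g. (g j, restrict g (a - {j}))) (extensional a)"
proof (rule inj_on_inverseI)
  fix g :: "'a \<Rightarrow> 'b" assume "g \<in> extensional a"
  then show "(\<lambda>(x, h). h(j := x)) (g j, restrict g (a - {j})) = g"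
    using assms by (auto simp: fun_eq_iff extensional_def)
qed

lemma subvec_split_coordinate:
  assumes "j \<in> a"
  shows "(\<lambda>w. (X j w, subvec X (a - {j}) w)) = (\<lambda>g. (g j, restrict g (a - {j}))) \<circ> subvec X a"
  using assms by (auto simp: subvec_def fun_eq_iff)

context information_space
begin

lemma MI_empty:
  assumes "simple_function M Y"
  shows "MI M b X Y {} = 0"
  using assms by (simp add: MI_def subvec_empty mutual_information_const)

lemma MI_eq_split_coordinate:
  assumes X: "finite a" "\<And>i. i \<in> a \<Longrightarrow> simple_function M (X i)"
    and Y: "simple_function M Y" and j: "j \<in> a"
  shows "MI M b X Y a = \<I>(\<lambda>w. (X j w, subvec X (a - {j}) w) ; Y)"
proof -
  have "subvec X a ` space M \<subseteq> extensional a"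
    by (auto simp: subvec_def)
  then show ?thesis
    unfolding MI_def subvec_split_coordinate[OF j] using X Y
    by (intro mutual_information_of_inj[symmetric] simple_function_subvec)
      (auto intro: inj_on_subset[OF inj_on_split_coordinate[OF j]])
qed

lemma CMI_eq_MI_diff:
  assumes X: "\<And>i. i \<in> {1..n} \<Longrightarrow> simple_function M (X i)"
    and Y: "simple_function M Y" and j: "j \<in> {1..n}"
  shows "CMI M b n X Y j = MI M b X Y {1..n} - MI M b X Y ({1..n} - {j})"
proof -
  let ?Z = "subvec X ({1..n} - {j})"
  have Z: "simple_function M ?Z"
    using X by (intro simple_function_subvec) auto
  have "CMI M b n X Y j = \<I>(X j ; Y | ?Z)"
    by (simp add: CMI_def)
  also have "\<dots> = \<I>(\<lambda>w. (X j w, ?Z w) ; Y) - \<I>(?Z ; Y)"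
    using X Y Z j by (intro conditional_mutual_information_chain_rule) auto
  also have "\<I>(\<lambda>w. (X j w, ?Z w) ; Y) = MI M b X Y {1..n}"
    using X Y j by (intro MI_eq_split_coordinate[symmetric]) auto
  finally show ?thesis
    by (simp add: MI_def)
qed

end

lemma finite_antichains: "finite (antichains n)"
  by (rule finite_subset[of _ "Pow (Pow {1..n})"]) (auto simp: antichains_def)

lemma vuln_le: "vuln n \<alpha> \<le> n"
proof -
  have "vuln n \<alpha> \<le> card {1..n}"
    unfolding vuln_def by (rule card_mono) auto
  then show ?thesis
    by simp
qed

lemma card_not_vulnerable: "card {j \<in> {1..n}. \<exists>c\<in>\<alpha>. j \<notin> c} = n - vuln n \<alpha>"
proof -
  have "{j \<in> {1..n}. \<exists>c\<in>\<alpha>. j \<notin> c} = {1..n} - {i \<in> {1..n}. \<forall>c\<in>\<alpha>. i \<in> c}"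
    by auto
  moreover have "card ({1..n} - {i \<in> {1..n}. \<forall>c\<in>\<alpha>. i \<in> c})
      = card {1..n} - card {i \<in> {1..n}. \<forall>c\<in>\<alpha>. i \<in> c}"
    by (rule card_Diff_subset) auto
  ultimately show ?thesis
    unfolding vuln_def by simp
qed

lemma sum_antichains_avoiding:
  "(\<Sum>j=1..n. \<Sum>\<alpha>\<in>{\<alpha> \<in> antichains n. \<exists>c\<in>\<alpha>. j \<notin> c}. Pd \<alpha>)
    = (\<Sum>\<alpha>\<in>antichains n. (real n - real (vuln n \<alpha>)) * Pd \<alpha>)"
proof -
  have "(\<Sum>j=1..n. \<Sum>\<alpha>\<in>{\<alpha> \<in> antichains n. \<exists>c\<in>\<alpha>. j \<notin> c}. Pd \<alpha>)
      = (\<Sum>j=1..n. \<Sum>\<alpha>\<in>antichains n. if \<exists>c\<in>\<alpha>. j \<notin> c then Pd \<alpha> else 0)"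
    by (simp add: sum.inter_filter finite_antichains)
  also have "\<dots> = (\<Sum>\<alpha>\<in>antichains n. \<Sum>j=1..n. if \<exists>c\<in>\<alpha>. j \<notin> c then Pd \<alpha> else 0)"
    by (rule sum.swap)
  also have "\<dots> = (\<Sum>\<alpha>\<in>antichains n. \<Sum>j\<in>{j \<in> {1..n}. \<exists>c\<in>\<alpha>. j \<notin> c}. Pd \<alpha>)"
    by (simp only: sum.inter_filter finite_atLeastAtMost)
  finally show ?thesis
    by (simp only: sum_constant card_not_vulnerable of_nat_diff[OF vuln_le])
qed

lemma DRSI_eq_sum_antichains:
  assumes "n \<ge> 1"
  shows "DRSI n Pd = (\<Sum>\<alpha>\<in>antichains n. (1 - real (vuln n \<alpha>)) * Pd \<alpha>)"
proof -
  have "(\<Sum>\<alpha>\<in>antichains n. (1 - real (vuln n \<alpha>)) * Pd \<alpha>)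
      = (\<Sum>k\<in>{0..n}. \<Sum>\<alpha>\<in>{\<alpha> \<in> antichains n. vuln n \<alpha> = k}.
          (1 - real (vuln n \<alpha>)) * Pd \<alpha>)"
    by (rule sum.group[symmetric]) (auto simp: finite_antichains vuln_le)
  also have "\<dots> = (\<Sum>k\<in>{0..n}. (1 - real k) * vuln_info n Pd k)"
    unfolding vuln_info_def by (auto simp: sum_distrib_left intro!: sum.cong)
  also have "{0..n} = insert 0 (insert 1 {2..n})"
    using assms by auto
  moreover have "(\<Sum>k=2..n. (1 - real k) * vuln_info n Pd k)
      = - (\<Sum>k=2..n. (real k - 1) * vuln_info n Pd k)"
    by (simp add: sum_negf[symmetric] algebra_simps)
  ultimately show ?thesis
    by (simp add: DRSI_def)
qed

lemma is_PID_MI_full: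
  assumes "is_PID M b n X Y Pd" "n \<ge> 1"
  shows "MI M b X Y {1..n} = (\<Sum>\<alpha>\<in>antichains n. Pd \<alpha>)"
proof -
  have "{\<alpha> \<in> antichains n. \<exists>c\<in>\<alpha>. c \<subseteq> {1..n}} = antichains n"
    by (auto simp: antichains_def)
  then show ?thesis
    using assms by (simp add: is_PID_def)
qed

text \<open>The PID identity says nothing about the empty index set, which arises for \<open>n = 1\<close>.\<close>

lemma is_PID_MI_delete:
  assumes PID: "is_PID M b n X Y Pd" and MI_empty: "MI M b X Y {} = 0" and j: "j \<in> {1..n}"
  shows "MI M b X Y ({1..n} - {j}) = (\<Sum>\<alpha>\<in>{\<alpha> \<in> antichains n. \<exists>c\<in>\<alpha>. j \<notin> c}. Pd \<alpha>)"
proof (cases "{1..n} - {j} = {}")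
  case True
  have "j \<in> c" if "\<alpha> \<in> antichains n" "c \<in> \<alpha>" for \<alpha> c
  proof -
    have "c \<noteq> {}" "c \<subseteq> {1..n}"
      using that by (auto simp: antichains_def)
    then show ?thesis
      using True by blast
  qed
  then have none_avoiding: "{\<alpha> \<in> antichains n. \<exists>c\<in>\<alpha>. j \<notin> c} = {}"
    by blast
  show ?thesis
    unfolding True MI_empty none_avoiding by simp
next
  case False
  have "{\<alpha> \<in> antichains n. \<exists>c\<in>\<alpha>. c \<subseteq> {1..n} - {j}}
      = {\<alpha> \<in> antichains n. \<exists>c\<in>\<alpha>. j \<notin> c}"
    by (auto simp: antichains_def)
  then show ?thesis
    using PID False by (simp add: is_PID_def)
qed

theorem proposition4:
  fixes M :: "'w measure" and b :: real and n :: nat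
    and X :: "nat \<Rightarrow> 'w \<Rightarrow> 'x" and Y :: "'w \<Rightarrow> 'y"
    and Pd :: "nat set set \<Rightarrow> real"
  assumes "information_space M b"
    and "n \<ge> 1"
    and "\<And>i. i \<in> {1..n} \<Longrightarrow> simple_function M (X i)"
    and "simple_function M Y"
    and "is_PID M b n X Y Pd"
  shows "DRSI n Pd = MI M b X Y {1..n} - (\<Sum>j=1..n. CMI M b n X Y j)"
proof -
  interpret information_space M b by fact
  let ?avoiding = "\<lambda>j. {\<alpha> \<in> antichains n. \<exists>c\<in>\<alpha>. j \<notin> c}"
  have full: "MI M b X Y {1..n} = (\<Sum>\<alpha>\<in>antichains n. Pd \<alpha>)"
    using assms(5,2) by (rule is_PID_MI_full)
  have "CMI M b n X Y j = (\<Sum>\<alpha>\<in>antichains n. Pd \<alpha>) - (\<Sum>\<alpha>\<in>?avoiding j. Pd \<alpha>)"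
    if j: "j \<in> {1..n}" for j
  proof -
    have "CMI M b n X Y j = MI M b X Y {1..n} - MI M b X Y ({1..n} - {j})"
      using assms(3,4) j by (rule CMI_eq_MI_diff)
    then show ?thesis
      using is_PID_MI_delete[OF assms(5) MI_empty[OF assms(4)] j] full by simp
  qed
  then have "(\<Sum>j=1..n. CMI M b n X Y j)
      = real n * (\<Sum>\<alpha>\<in>antichains n. Pd \<alpha>) - (\<Sum>j=1..n. \<Sum>\<alpha>\<in>?avoiding j. Pd \<alpha>)"
    by (simp add: sum_subtractf)
  also have "\<dots> = (\<Sum>\<alpha>\<in>antichains n. real (vuln n \<alpha>) * Pd \<alpha>)"
    unfolding sum_antichains_avoiding
    by (simp add: sum_distrib_left sum_subtractf[symmetric] algebra_simps)
  finally show ?thesis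
    unfolding DRSI_eq_sum_antichains[OF assms(2)] full
    by (simp add: algebra_simps sum_subtractf)
qed

end
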